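(* Let $H$ and $E$ be Hilbert spaces, let $T:H\to H$ be a bounded linear operator with $\ker T=\{0\}$, let $\gamma:E\to H$ be a bounded linear operator with $\ker\gamma=\{0\}$ and $\mathcal{R}(T)\cap\mathcal{R}(\gamma)=\{0\}$, and let $\Lambda$ be a linear operator in $E$ with domain $\mathcal{D}(\Lambda)\subset E$. Define on $\mathcal{D}(A)=\mathcal{R}(T)\dot+\mathcal{R}(\gamma)$ the maps $A(Tf+\gamma\varphi)=f$ and $\Gamma_0(Tf+\gamma\varphi)=\varphi$ ($f\in H,\varphi\in E$), and on $\mathcal{D}(\Gamma_1)=\mathcal{R}(T)\dot+\gamma\mathcal{D}(\Lambda)$ the map $\Gamma_1(Tf+\gamma\varphi)=\gamma^*f+\Lambda\varphi$ ($f\in H,\varphi\in\mathcal{D}(\Lambda)$). For $\lambda\in\mathbb{C}$ with $I-\lambda T$ boundedly invertible, let $M(\lambda)$ be the operator in $E$ defined by $M(\lambda)\Gamma_0u_\lambda=\Gamma_1u_\lambda$ for all $u_\lambda\in\ker(A-\lambda I)\cap\mathcal{D}(\Gamma_1)$. Then for every such $\lambda$, \[M(\lambda)=\Gamma_1(I-\lambda T)^{-1}\gamma=\Lambda+\lambda\gamma^*(I-\lambda T)^{-1}\gamma,\qquad \mathcal{D}(M(\lambda))=\mathcal{D}(\Lambda).\]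
   Context: $\mathcal{R}(\cdot)$ denotes range, $\dot+$ direct sum, $\gamma^*:H\to E$ the Hilbert-space adjoint of $\gamma$. $M(\lambda)$ is called the M-operator. *)

theory Defs
  imports "HOL-Analysis.Analysis"
begin

class complex_vector = real_vector +
  fixes scaleC :: "complex \<Rightarrow> 'a \<Rightarrow> 'a" (infixr \<open>*\<^sub>C\<close> 75)
  assumes scaleC_add_right: "a *\<^sub>C (x + y) = a *\<^sub>C x + a *\<^sub>C y"
    and scaleC_add_left: "(a + b) *\<^sub>C x = a *\<^sub>C x + b *\<^sub>C x"
    and scaleC_scaleC: "a *\<^sub>C (b *\<^sub>C x) = (a * b) *\<^sub>C x"
    and scaleC_one: "1 *\<^sub>C x = x"
    and scaleR_scaleC: "r *\<^sub>R x = complex_of_real r *\<^sub>C x"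

class complex_inner = complex_vector + real_normed_vector +
  fixes cinner :: "'a \<Rightarrow> 'a \<Rightarrow> complex"
  assumes cinner_commute: "cinner x y = cnj (cinner y x)"
    and cinner_add_right: "cinner x (y + z) = cinner x y + cinner x z"
    and cinner_scaleC_right: "cinner x (a *\<^sub>C y) = a * cinner x y"
    and cinner_self_norm: "cinner x x = complex_of_real ((norm x)\<^sup>2)"

class chilbert_space = complex_inner + complete_space

definition csubspace :: "'a::complex_vector set \<Rightarrow> bool" where
  "csubspace S \<longleftrightarrow> 0 \<in> S \<and> (\<forall>x\<in>S. \<forall>y\<in>S. x + y \<in> S) \<and> (\<forall>c. \<forall>x\<in>S. c *\<^sub>C x \<in> S)"

text \<open>A linear operator \<open>L\<close> with domain \<open>D\<close> (values outside \<open>D\<close> are irrelevant).\<close>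
definition clinear_on :: "'a::complex_vector set \<Rightarrow> ('a \<Rightarrow> 'b::complex_vector) \<Rightarrow> bool" where
  "clinear_on D L \<longleftrightarrow> csubspace D \<and>
     (\<forall>x\<in>D. \<forall>y\<in>D. L (x + y) = L x + L y) \<and> (\<forall>c. \<forall>x\<in>D. L (c *\<^sub>C x) = c *\<^sub>C L x)"

definition bounded_clinear :: "('a::complex_inner \<Rightarrow> 'b::complex_inner) \<Rightarrow> bool" where
  "bounded_clinear L \<longleftrightarrow> clinear_on UNIV L \<and> (\<exists>K. \<forall>x. norm (L x) \<le> norm x * K)"

definition is_cadjoint :: "('a::complex_inner \<Rightarrow> 'b::complex_inner) \<Rightarrow> ('b \<Rightarrow> 'a) \<Rightarrow> bool" where
  "is_cadjoint L L' \<longleftrightarrow> (\<forall>x y. cinner y (L x) = cinner (L' y) x)"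

definition I_minus :: "complex \<Rightarrow> ('a::complex_vector \<Rightarrow> 'a) \<Rightarrow> 'a \<Rightarrow> 'a" where
  "I_minus z T = (\<lambda>x. x - z *\<^sub>C T x)"

definition boundedly_invertible :: "('a::complex_inner \<Rightarrow> 'a) \<Rightarrow> bool" where
  "boundedly_invertible S \<longleftrightarrow> bij S \<and> bounded_clinear (inv S)"

definition dom_A :: "('h \<Rightarrow> 'h::complex_vector) \<Rightarrow> ('e \<Rightarrow> 'h) \<Rightarrow> 'h set" where
  "dom_A T \<gamma> = {T f + \<gamma> \<phi> | f \<phi>. True}"

definition A_op :: "('h \<Rightarrow> 'h::complex_vector) \<Rightarrow> ('e \<Rightarrow> 'h) \<Rightarrow> 'h \<Rightarrow> 'h" where
  "A_op T \<gamma> u = (THE f. \<exists>\<phi>. u = T f + \<gamma> \<phi>)"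

definition Gamma0 :: "('h \<Rightarrow> 'h::complex_vector) \<Rightarrow> ('e \<Rightarrow> 'h) \<Rightarrow> 'h \<Rightarrow> 'e" where
  "Gamma0 T \<gamma> u = (THE \<phi>. \<exists>f. u = T f + \<gamma> \<phi>)"

definition dom_Gamma1 :: "('h \<Rightarrow> 'h::complex_vector) \<Rightarrow> ('e \<Rightarrow> 'h) \<Rightarrow> 'e set \<Rightarrow> 'h set" where
  "dom_Gamma1 T \<gamma> D\<Lambda> = {T f + \<gamma> \<phi> | f \<phi>. \<phi> \<in> D\<Lambda>}"

definition Gamma1 :: "('h \<Rightarrow> 'h::complex_vector) \<Rightarrow> ('e \<Rightarrow> 'h) \<Rightarrow> ('h \<Rightarrow> 'e) \<Rightarrow> ('e \<Rightarrow> 'e::complex_vector)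
    \<Rightarrow> 'h \<Rightarrow> 'e" where
  "Gamma1 T \<gamma> \<gamma>' \<Lambda> u = \<gamma>' (A_op T \<gamma> u) + \<Lambda> (Gamma0 T \<gamma> u)"

definition M_graph :: "('h \<Rightarrow> 'h::complex_vector) \<Rightarrow> ('e \<Rightarrow> 'h) \<Rightarrow> ('h \<Rightarrow> 'e) \<Rightarrow> 'e set
    \<Rightarrow> ('e \<Rightarrow> 'e::complex_vector) \<Rightarrow> complex \<Rightarrow> ('e \<times> 'e) set" where
  "M_graph T \<gamma> \<gamma>' D\<Lambda> \<Lambda> z =
     {(Gamma0 T \<gamma> u, Gamma1 T \<gamma> \<gamma>' \<Lambda> u) | u.
        u \<in> dom_A T \<gamma> \<and> u \<in> dom_Gamma1 T \<gamma> D\<Lambda> \<and> A_op T \<gamma> u = z *\<^sub>C u}"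

end

theory Submission
  imports Defs
begin

text \<open>The resolvent \<open>u = (I - z T)\<^sup>-\<^sup>1 \<gamma> \<phi>\<close> is characterised by \<open>u = T (z u) + \<gamma> \<phi>\<close>, which is
  exactly the decomposition of \<open>u\<close> in \<open>\<R>(T) \<dotplus> \<R>(\<gamma>)\<close>. Hence \<open>A u = z u\<close>, \<open>\<Gamma>\<^sub>0 u = \<phi>\<close>, and
  conversely every solution of \<open>A u = z u\<close> has this form. Reading off \<open>\<Gamma>\<^sub>1\<close> on the decomposition
  gives \<open>\<Gamma>\<^sub>1 u = \<gamma>\<^sup>* (z u) + \<Lambda> \<phi>\<close>, and the adjoint is linear.\<close>

lemma clinear_on_UNIV_minus:
  assumes "clinear_on UNIV L" shows "L (- x) = - L x"
proof -
  have "- x = complex_of_real (-1) *\<^sub>C x" "- L x = complex_of_real (-1) *\<^sub>C L x"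
    by (metis scaleR_minus1_left scaleR_scaleC)+
  then show ?thesis using assms unfolding clinear_on_def by auto
qed

lemma clinear_on_UNIV_diff:
  assumes "clinear_on UNIV L" shows "L (x - y) = L x - L y"
proof -
  have "L (x + - y) = L x + L (- y)" using assms unfolding clinear_on_def by blast
  then show ?thesis using clinear_on_UNIV_minus[OF assms] by (simp only: diff_conv_add_uminus)
qed

lemma cinner_scaleC_left: "cinner (a *\<^sub>C x) y = cnj a * cinner x y"
  by (metis cinner_commute cinner_scaleC_right complex_cnj_mult)

lemma cinner_add_left: "cinner (x + y) z = cinner x z + cinner y z"
  by (metis cinner_commute cinner_add_right complex_cnj_add)

lemma cinner_eqI:
  fixes a b :: "'a::complex_inner"
  assumes "\<And>x. cinner a x = cinner b x" shows "a = b"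
proof -
  have minus: "- b = complex_of_real (-1) *\<^sub>C b" by (metis scaleR_minus1_left scaleR_scaleC)
  have "cinner (a - b) (a - b) = cinner a (a - b) - cinner b (a - b)"
    unfolding diff_conv_add_uminus minus cinner_add_left cinner_scaleC_left by simp
  also have "\<dots> = 0" using assms by simp
  finally have "complex_of_real ((norm (a - b))\<^sup>2) = 0" using cinner_self_norm by metis
  then show ?thesis by simp
qed

lemma is_cadjoint_scaleC:
  assumes "is_cadjoint L L'" shows "L' (c *\<^sub>C y) = c *\<^sub>C L' y"
proof (rule cinner_eqI)
  fix x
  have "cinner (L' (c *\<^sub>C y)) x = cinner (c *\<^sub>C y) (L x)"
    using assms unfolding is_cadjoint_def by metis
  also have "\<dots> = cnj c * cinner (L' y) x"
    using assms unfolding cinner_scaleC_left is_cadjoint_def by metis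
  also have "\<dots> = cinner (c *\<^sub>C L' y) x" by (rule cinner_scaleC_left[symmetric])
  finally show "cinner (L' (c *\<^sub>C y)) x = cinner (c *\<^sub>C L' y) x" .
qed

lemma inv_I_minus_eq_iff:
  assumes "clinear_on UNIV T" and "bij (I_minus z T)"
  shows "u = inv (I_minus z T) y \<longleftrightarrow> u = T (z *\<^sub>C u) + y"
proof -
  have "T (z *\<^sub>C u) = z *\<^sub>C T u" using assms(1) unfolding clinear_on_def by auto
  then have "u = T (z *\<^sub>C u) + y \<longleftrightarrow> I_minus z T u = y"
    unfolding I_minus_def by (auto simp: algebra_simps)
  also have "\<dots> \<longleftrightarrow> u = inv (I_minus z T) y"
    using assms(2) by (metis bij_inv_eq_iff)
  finally show ?thesis by simp
qed

context
  fixes T :: "'h::complex_vector \<Rightarrow> 'h" and \<gamma> :: "'e::complex_vector \<Rightarrow> 'h"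
  assumes T_lin: "clinear_on UNIV T" and \<gamma>_lin: "clinear_on UNIV \<gamma>"
    and T_inj: "\<forall>f. T f = 0 \<longrightarrow> f = 0" and \<gamma>_inj: "\<forall>\<phi>. \<gamma> \<phi> = 0 \<longrightarrow> \<phi> = 0"
    and ranges: "range T \<inter> range \<gamma> = {0}"
begin

lemma direct_sum_decomposition_unique:
  assumes "T f + \<gamma> \<phi> = T f' + \<gamma> \<phi>'" shows "f = f' \<and> \<phi> = \<phi>'"
proof -
  have eq: "T (f - f') = \<gamma> (\<phi>' - \<phi>)"
    using assms by (simp add: clinear_on_UNIV_diff[OF T_lin] clinear_on_UNIV_diff[OF \<gamma>_lin]
        algebra_simps)
  then have "T (f - f') = 0" using ranges by (metis IntI rangeI singletonD)
  then show ?thesis using eq T_inj \<gamma>_inj by auto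
qed

lemma A_op_eq: "A_op T \<gamma> (T f + \<gamma> \<phi>) = f"
  unfolding A_op_def by (rule the_equality) (auto dest: direct_sum_decomposition_unique)

lemma Gamma0_eq: "Gamma0 T \<gamma> (T f + \<gamma> \<phi>) = \<phi>"
  unfolding Gamma0_def by (rule the_equality) (auto dest: direct_sum_decomposition_unique)

lemma Gamma1_eq: "Gamma1 T \<gamma> \<gamma>' \<Lambda> (T f + \<gamma> \<phi>) = \<gamma>' f + \<Lambda> \<phi>"
  unfolding Gamma1_def A_op_eq Gamma0_eq ..

lemma in_dom_Gamma1_iff: "T f + \<gamma> \<phi> \<in> dom_Gamma1 T \<gamma> D\<Lambda> \<longleftrightarrow> \<phi> \<in> D\<Lambda>"
  unfolding dom_Gamma1_def by (auto dest: direct_sum_decomposition_unique)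

context
  fixes z :: complex
  assumes bij_I_minus: "bij (I_minus z T)"
begin

lemma resolvent_decomposition:
  "inv (I_minus z T) (\<gamma> \<phi>) = T (z *\<^sub>C inv (I_minus z T) (\<gamma> \<phi>)) + \<gamma> \<phi>"
  using inv_I_minus_eq_iff[OF T_lin bij_I_minus] by blast

lemma resolvent_in_dom_Gamma1_iff:
  "inv (I_minus z T) (\<gamma> \<phi>) \<in> dom_Gamma1 T \<gamma> D\<Lambda> \<longleftrightarrow> \<phi> \<in> D\<Lambda>"
  by (subst resolvent_decomposition) (rule in_dom_Gamma1_iff)

lemma Gamma0_resolvent: "Gamma0 T \<gamma> (inv (I_minus z T) (\<gamma> \<phi>)) = \<phi>"
  by (subst resolvent_decomposition) (rule Gamma0_eq)

lemma Gamma1_resolvent: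
  assumes "\<And>c y. \<gamma>' (c *\<^sub>C y) = c *\<^sub>C \<gamma>' y"
  shows "Gamma1 T \<gamma> \<gamma>' \<Lambda> (inv (I_minus z T) (\<gamma> \<phi>))
    = \<Lambda> \<phi> + z *\<^sub>C \<gamma>' (inv (I_minus z T) (\<gamma> \<phi>))"
proof -
  have "Gamma1 T \<gamma> \<gamma>' \<Lambda> (inv (I_minus z T) (\<gamma> \<phi>))
      = \<gamma>' (z *\<^sub>C inv (I_minus z T) (\<gamma> \<phi>)) + \<Lambda> \<phi>"
    by (subst resolvent_decomposition) (rule Gamma1_eq)
  then show ?thesis by (simp add: assms add.commute)
qed

lemma eigenvector_in_dom_Gamma1_iff:
  "u \<in> dom_A T \<gamma> \<and> u \<in> dom_Gamma1 T \<gamma> D\<Lambda> \<and> A_op T \<gamma> u = z *\<^sub>C u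
    \<longleftrightarrow> (\<exists>\<phi>\<in>D\<Lambda>. u = inv (I_minus z T) (\<gamma> \<phi>))"
proof
  assume eigen: "u \<in> dom_A T \<gamma> \<and> u \<in> dom_Gamma1 T \<gamma> D\<Lambda> \<and> A_op T \<gamma> u = z *\<^sub>C u"
  then obtain f \<phi> where u: "u = T f + \<gamma> \<phi>" and "\<phi> \<in> D\<Lambda>"
    unfolding dom_Gamma1_def by blast
  have "f = A_op T \<gamma> u" unfolding u A_op_eq ..
  also have "\<dots> = z *\<^sub>C u" using eigen by blast
  finally have "u = T (z *\<^sub>C u) + \<gamma> \<phi>" using u by simp
  with \<open>\<phi> \<in> D\<Lambda>\<close> show "\<exists>\<phi>\<in>D\<Lambda>. u = inv (I_minus z T) (\<gamma> \<phi>)"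
    unfolding inv_I_minus_eq_iff[OF T_lin bij_I_minus] ..
next
  assume "\<exists>\<phi>\<in>D\<Lambda>. u = inv (I_minus z T) (\<gamma> \<phi>)"
  then obtain \<phi> where "\<phi> \<in> D\<Lambda>" and u: "u = T (z *\<^sub>C u) + \<gamma> \<phi>"
    unfolding inv_I_minus_eq_iff[OF T_lin bij_I_minus] ..
  have "u \<in> dom_A T \<gamma>" unfolding dom_A_def using u by blast
  moreover have "u \<in> dom_Gamma1 T \<gamma> D\<Lambda>"
    using \<open>\<phi> \<in> D\<Lambda>\<close> by (subst u) (simp only: in_dom_Gamma1_iff)
  moreover have "A_op T \<gamma> u = z *\<^sub>C u" by (subst (1) u) (rule A_op_eq)
  ultimately show "u \<in> dom_A T \<gamma> \<and> u \<in> dom_Gamma1 T \<gamma> D\<Lambda> \<and> A_op T \<gamma> u = z *\<^sub>C u"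
    by blast
qed

lemma M_graph_eq:
  "M_graph T \<gamma> \<gamma>' D\<Lambda> \<Lambda> z =
    {(\<phi>, Gamma1 T \<gamma> \<gamma>' \<Lambda> (inv (I_minus z T) (\<gamma> \<phi>))) | \<phi>. \<phi> \<in> D\<Lambda>}"
  unfolding M_graph_def eigenvector_in_dom_Gamma1_iff by (force simp: Gamma0_resolvent)

end

end

theorem theorem2:
  fixes T :: "'h::chilbert_space \<Rightarrow> 'h"
    and \<gamma> :: "'e::chilbert_space \<Rightarrow> 'h"
    and \<gamma>' :: "'h \<Rightarrow> 'e"
    and D\<Lambda> :: "'e set"
    and \<Lambda> :: "'e \<Rightarrow> 'e"
    and z :: complex
  assumes T_bdd: "bounded_clinear T"
    and T_inj: "\<forall>f. T f = 0 \<longrightarrow> f = 0"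
    and \<gamma>_bdd: "bounded_clinear \<gamma>"
    and \<gamma>_inj: "\<forall>\<phi>. \<gamma> \<phi> = 0 \<longrightarrow> \<phi> = 0"
    and ranges: "range T \<inter> range \<gamma> = {0}"
    and adj: "is_cadjoint \<gamma> \<gamma>'"
    and \<Lambda>_lin: "clinear_on D\<Lambda> \<Lambda>"
    and invz: "boundedly_invertible (I_minus z T)"
  shows "(\<forall>\<phi>. inv (I_minus z T) (\<gamma> \<phi>) \<in> dom_Gamma1 T \<gamma> D\<Lambda> \<longleftrightarrow> \<phi> \<in> D\<Lambda>)
    \<and> M_graph T \<gamma> \<gamma>' D\<Lambda> \<Lambda> z =
        {(\<phi>, Gamma1 T \<gamma> \<gamma>' \<Lambda> (inv (I_minus z T) (\<gamma> \<phi>))) | \<phi>. \<phi> \<in> D\<Lambda>}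
    \<and> (\<forall>\<phi>\<in>D\<Lambda>. Gamma1 T \<gamma> \<gamma>' \<Lambda> (inv (I_minus z T) (\<gamma> \<phi>))
                 = \<Lambda> \<phi> + z *\<^sub>C \<gamma>' (inv (I_minus z T) (\<gamma> \<phi>)))"
proof -
  have T_lin: "clinear_on UNIV T" and \<gamma>_lin: "clinear_on UNIV \<gamma>"
    using T_bdd \<gamma>_bdd unfolding bounded_clinear_def by auto
  have bij: "bij (I_minus z T)" using invz unfolding boundedly_invertible_def by auto
  note facts = T_lin \<gamma>_lin T_inj \<gamma>_inj ranges bij
  show ?thesis
    using resolvent_in_dom_Gamma1_iff[OF facts] M_graph_eq[OF facts]
      Gamma1_resolvent[OF facts is_cadjoint_scaleC[OF adj]] by simp
qed

end
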